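(* Let $n\ge 2$ be an integer and let $A$ be a Bernstein set of $(L_n,\tau_E|_{L_n})$. Then $(X_n,\tau(A))$ is Lindelöf but not perfect.
   Context: For $\overline{x},\overline{a}\in\mathbb R^n$ let $|\overline{x}-\overline{a}|$ be the Euclidean distance and $B(\overline{a},\epsilon)=\{\overline{x}\in\mathbb R^n:|\overline{x}-\overline{a}|<\epsilon\}$. Let $P_n=\{\overline{x}\in\mathbb R^n: x_n>0\}$, $L_n=\{\overline{x}\in\mathbb R^n: x_n=0\}$, $X_n=P_n\cup L_n$, and let $\tau_E$ denote the Euclidean topology on $X_n$ (so $(L_n,\tau_E|_{L_n})$ is homeomorphic to $\mathbb R^{n-1}$). For $\overline{a}\in L_n$ and $\epsilon>0$ put $\overline{a(\epsilon)}=(a_1,\dots,a_{n-1},\epsilon)$ and $\tilde B(\overline{a},\epsilon)=\{\overline{a}\}\cup B(\overline{a(\epsilon)},\epsilon)$. For $A\subseteq L_n$, the topology $\tau(A)$ on $X_n$ is generated by the local bases: at $\overline{a}\in P_n$, the sets $B(\overline{a},\epsilon)$ with $0<\epsilon<a_n$; at $\overline{a}\in A$, the sets $B(\overline{a},\epsilon)\cap X_n$ with $\epsilon>0$; at $\overline{a}\in L_n\setminus A$, the sets $\tilde B(\overline{a},\epsilon)$ with $\epsilon>0$. A subset $A$ of $(L_n,\tau_E|_{L_n})$ is a Bernstein set if both $A$ and $L_n\setminus A$ intersect every uncountable compact subset of $(L_n,\tau_E|_{L_n})$. A space is perfect if every closed set is a $G_\delta$-set. *)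

theory Defs
  imports "HOL-Analysis.Analysis"
begin

(* R^n is modelled as 'a \<times> real with 'a::euclidean_space of dimension n-1 \<ge> 1;
   the last coordinate x_n is snd.  dist on products is the Euclidean distance. *)

definition Pn :: "('a::euclidean_space \<times> real) set" where
  "Pn = {x. snd x > 0}"

definition Ln :: "('a::euclidean_space \<times> real) set" where
  "Ln = {x. snd x = 0}"

definition Xn :: "('a::euclidean_space \<times> real) set" where
  "Xn = Pn \<union> Ln"

definition tildeB :: "('a::euclidean_space \<times> real) \<Rightarrow> real \<Rightarrow> ('a \<times> real) set" where
  "tildeB a e = insert a (ball (fst a, e) e)"

definition basic_nbhd :: "('a::euclidean_space \<times> real) set \<Rightarrow> ('a \<times> real) \<Rightarrow> real \<Rightarrow> ('a \<times> real) set" where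
  "basic_nbhd A x e =
     (if x \<in> Pn then ball x e
      else if x \<in> A then ball x e \<inter> Xn
      else tildeB x e)"

definition admissible_radius :: "('a::euclidean_space \<times> real) \<Rightarrow> real \<Rightarrow> bool" where
  "admissible_radius x e \<longleftrightarrow> 0 < e \<and> (x \<in> Pn \<longrightarrow> e < snd x)"

definition tauA :: "('a::euclidean_space \<times> real) set \<Rightarrow> ('a \<times> real) topology" where
  "tauA A = topology (\<lambda>U. U \<subseteq> Xn \<and>
      (\<forall>x\<in>U. \<exists>e. admissible_radius x e \<and> basic_nbhd A x e \<subseteq> U))"

definition Bernstein_set :: "('a::euclidean_space \<times> real) set \<Rightarrow> bool" where
  "Bernstein_set A \<longleftrightarrow> A \<subseteq> Ln \<and>
     (\<forall>K. K \<subseteq> Ln \<and> compact K \<and> uncountable K \<longrightarrow> K \<inter> A \<noteq> {} \<and> K \<inter> (Ln - A) \<noteq> {})"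

definition perfect_space_top :: "'b topology \<Rightarrow> bool" where
  "perfect_space_top X \<longleftrightarrow> (\<forall>C. closedin X C \<longrightarrow> gdelta_in X C)"

end

theory Submission
  imports Defs
begin

(* A \<tau>(A)-open set U contains a Euclidean ball (intersected with X_n) around each of its
   points in P_n \<union> A, so U \<inter> (P_n \<union> A) lies in the Euclidean open set
   interior (U \<union> -X_n).  A Euclidean open set containing the Bernstein set A misses only
   countably many points of L_n: the remainder is closed and disjoint from A, hence contains
   no uncountable compact set.
   Lindelof: by Euclidean Lindelof, countably many members of a cover already cover the union
   of these interiors, and only countably many points of L_n lie outside it.
   Not perfect: A is \<tau>(A)-closed.  If A = \<Inter>\<U> with \<U> countable and \<tau>(A)-open, every point of
   L_n - A lies outside one of the countably many interiors, so L_n - A would be countable,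
   whereas the complement of a Bernstein set is uncountable. *)

lemma tangent_ball_mono:
  fixes a :: "'a::metric_space"
  assumes "e \<le> e'"
  shows "ball (a, e) e \<subseteq> ball (a, e') e'"
proof
  fix y assume "y \<in> ball (a, e) e"
  moreover have "dist (a, e') y \<le> dist (a, e') (a, e) + dist (a, e) y"
    by (rule dist_triangle)
  moreover have "dist (a, e') (a, e) = e' - e"
    using assms by (simp add: dist_Pair_Pair dist_real_def)
  ultimately show "y \<in> ball (a, e') e'" by simp
qed

lemma ball_subset_Pn:
  fixes x :: "'a::euclidean_space \<times> real"
  assumes "e \<le> snd x"
  shows "ball x e \<subseteq> Pn"
proof
  fix y assume "y \<in> ball x e"
  then have "\<bar>snd x - snd y\<bar> < e"
    using dist_snd_le[of x y] by (simp add: dist_real_def)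
  then show "y \<in> Pn" using assms by (simp add: Pn_def)
qed

lemma tangent_ball_subset_Pn: "ball (a::'a::euclidean_space, e) e \<subseteq> Pn"
  using ball_subset_Pn[of e "(a, e)"] by simp

lemma Ln_Int_Pn: "Ln \<inter> Pn = {}"
  by (auto simp: Ln_def Pn_def)

lemma closed_Ln: "closed (Ln :: ('a::euclidean_space \<times> real) set)"
proof -
  have "(Ln :: ('a \<times> real) set) = UNIV \<times> {0}" by (auto simp: Ln_def)
  then show ?thesis by (metis closed_Times closed_UNIV closed_singleton)
qed

lemma basic_nbhd_mono:
  assumes "e \<le> e'"
  shows "basic_nbhd A x e \<subseteq> basic_nbhd A x e'"
  using assms tangent_ball_mono[OF assms, of "fst x"]
  by (auto simp: basic_nbhd_def tildeB_def)

lemma ex_admissible_radius: "\<exists>e. admissible_radius x e"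
  by (rule exI[of _ "if snd x > 0 then snd x / 2 else 1"]) (auto simp: admissible_radius_def Pn_def)

lemma basic_nbhd_subset_insert_Pn:
  assumes "x \<in> Xn" "x \<notin> A" "admissible_radius x e"
  shows "basic_nbhd A x e \<subseteq> insert x Pn"
  using assms ball_subset_Pn[of e x] tangent_ball_subset_Pn[of "fst x" e]
  by (auto simp: basic_nbhd_def tildeB_def admissible_radius_def Xn_def subset_iff)

lemma basic_nbhd_subset_Xn:
  assumes "x \<in> Xn" "admissible_radius x e"
  shows "basic_nbhd A x e \<subseteq> Xn"
  using assms ball_subset_Pn[of e x] tangent_ball_subset_Pn[of "fst x" e]
  by (auto simp: basic_nbhd_def tildeB_def admissible_radius_def Xn_def subset_iff)

lemma istopology_tauA:
  "istopology (\<lambda>U. U \<subseteq> Xn \<and> (\<forall>x\<in>U. \<exists>e. admissible_radius x e \<and> basic_nbhd A x e \<subseteq> U))"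
  unfolding istopology_def
proof (rule conjI; intro allI impI)
  fix S T :: "('a \<times> real) set"
  assume S: "S \<subseteq> Xn \<and> (\<forall>x\<in>S. \<exists>e. admissible_radius x e \<and> basic_nbhd A x e \<subseteq> S)"
    and T: "T \<subseteq> Xn \<and> (\<forall>x\<in>T. \<exists>e. admissible_radius x e \<and> basic_nbhd A x e \<subseteq> T)"
  have "\<exists>e. admissible_radius x e \<and> basic_nbhd A x e \<subseteq> S \<inter> T" if "x \<in> S \<inter> T" for x
  proof -
    obtain e1 e2 where e1: "admissible_radius x e1" "basic_nbhd A x e1 \<subseteq> S"
      and e2: "admissible_radius x e2" "basic_nbhd A x e2 \<subseteq> T"
      using S T \<open>x \<in> S \<inter> T\<close> by blast
    then have "admissible_radius x (min e1 e2)"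
      by (auto simp: admissible_radius_def)
    moreover have "basic_nbhd A x (min e1 e2) \<subseteq> S \<inter> T"
      using basic_nbhd_mono[of "min e1 e2" e1 A x] basic_nbhd_mono[of "min e1 e2" e2 A x] e1 e2
      by auto
    ultimately show ?thesis by blast
  qed
  then show "S \<inter> T \<subseteq> Xn \<and> (\<forall>x\<in>S \<inter> T. \<exists>e. admissible_radius x e \<and> basic_nbhd A x e \<subseteq> S \<inter> T)"
    using S by blast
next
  fix \<K> :: "('a \<times> real) set set"
  assume "\<forall>K\<in>\<K>. K \<subseteq> Xn \<and> (\<forall>x\<in>K. \<exists>e. admissible_radius x e \<and> basic_nbhd A x e \<subseteq> K)"
  then show "\<Union>\<K> \<subseteq> Xn \<and> (\<forall>x\<in>\<Union>\<K>. \<exists>e. admissible_radius x e \<and> basic_nbhd A x e \<subseteq> \<Union>\<K>)"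
    by (meson Union_iff Union_least Union_upper order_trans)
qed

lemma openin_tauA:
  "openin (tauA A) U \<longleftrightarrow>
     U \<subseteq> Xn \<and> (\<forall>x\<in>U. \<exists>e. admissible_radius x e \<and> basic_nbhd A x e \<subseteq> U)"
  unfolding tauA_def topology_inverse'[OF istopology_tauA] ..

lemma topspace_tauA: "topspace (tauA A) = Xn"
proof
  show "topspace (tauA A) \<subseteq> Xn" by (auto simp: topspace_def openin_tauA)
  have "openin (tauA A) Xn"
    unfolding openin_tauA using ex_admissible_radius basic_nbhd_subset_Xn by blast
  then show "Xn \<subseteq> topspace (tauA A)" by (rule openin_subset)
qed

lemma closedin_tauA_self:
  assumes "A \<subseteq> Ln"
  shows "closedin (tauA A) A"
proof -
  have "insert x Pn \<subseteq> Xn - A" if "x \<in> Xn - A" for x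
    using that assms Ln_Int_Pn by (auto simp: Xn_def)
  then have "openin (tauA A) (Xn - A)"
    unfolding openin_tauA
    using ex_admissible_radius basic_nbhd_subset_insert_Pn by (metis DiffE Diff_subset order_trans)
  moreover have "A \<subseteq> Xn" using assms by (auto simp: Xn_def)
  ultimately show ?thesis by (simp add: closedin_def topspace_tauA)
qed

lemma openin_tauA_subset_interior:
  assumes "openin (tauA A) U"
  shows "U \<inter> (Pn \<union> A) \<subseteq> interior (U \<union> - Xn)"
proof
  fix x assume x: "x \<in> U \<inter> (Pn \<union> A)"
  then obtain e where e: "admissible_radius x e" "basic_nbhd A x e \<subseteq> U"
    using assms by (auto simp: openin_tauA)
  then have "ball x e \<inter> Xn \<subseteq> U"
    using x by (auto simp: basic_nbhd_def)
  then have "ball x e \<subseteq> U \<union> - Xn" by blast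
  moreover have "0 < e" using e by (simp add: admissible_radius_def)
  ultimately show "x \<in> interior (U \<union> - Xn)"
    by (meson centre_in_ball interior_maximal open_ball interiorI)
qed

lemma uncountable_compact_disjoint_countable:
  fixes D :: "'a::euclidean_space set"
  assumes "countable D"
  obtains K where "compact K" "uncountable K" "K \<inter> D = {}"
proof -
  have negligible_countable: "negligible C" if "countable C" for C :: "'a set"
    using that by (simp add: negligible_iff_null_sets countable_imp_null_set_lborel null_sets_completionI)
  have "- D \<in> sets lebesgue"
    using negligible_countable[OF assms] by (simp add: negligible_imp_sets Compl_in_sets_lebesgue)
  then obtain N C where N: "negligible N" and C: "\<And>n::nat. compact (C n)" and eq: "- D = (\<Union>n. C n) \<union> N"
    using lebesgue_regular_inner by metis
  have "\<exists>n. uncountable (C n)"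
  proof (rule ccontr)
    assume "\<not> (\<exists>n. uncountable (C n))"
    then have "negligible ((\<Union>n. C n) \<union> N \<union> D)"
      using N assms negligible_countable by (simp add: negligible_Union_nat)
    moreover have "(\<Union>n. C n) \<union> N \<union> D = UNIV" using eq by blast
    ultimately show False by simp
  qed
  then show ?thesis using that C eq by blast
qed

lemma closed_uncountable_imp_compact_subset:
  fixes F :: "'a::{heine_borel,real_normed_vector} set"
  assumes "closed F" "uncountable F"
  obtains K where "compact K" "uncountable K" "K \<subseteq> F"
proof -
  obtain C where "\<And>n. compact (C n)" "\<And>n. C n \<subseteq> F" "(\<Union>n::nat. C n) = F"
    using closed_Union_compact_subsets[OF assms(1)] by metis
  moreover have "\<exists>n. uncountable (C n)"
  proof (rule ccontr)
    assume "\<not> (\<exists>n. uncountable (C n))"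
    then have "countable (\<Union>n. C n)" by (intro countable_UN) auto
    then show False using assms(2) \<open>(\<Union>n. C n) = F\<close> by simp
  qed
  ultimately show ?thesis using that by blast
qed

lemma Bernstein_set_uncountable_Ln_Diff:
  fixes A :: "('a::euclidean_space \<times> real) set"
  assumes "Bernstein_set A"
  shows "uncountable (Ln - A)"
proof
  assume "countable (Ln - A)"
  then obtain T :: "'a set" where T: "compact T" "uncountable T" "T \<inter> fst ` (Ln - A) = {}"
    using uncountable_compact_disjoint_countable by (metis countable_image)
  have "compact (T \<times> {0::real})" using T(1) by (simp add: compact_Times)
  moreover have "uncountable (T \<times> {0::real})"
  proof
    assume "countable (T \<times> {0::real})"
    then have "countable (fst ` (T \<times> {0::real}))" by (rule countable_image)
    then show False using T(2) by simp
  qed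
  moreover have "T \<times> {0} \<subseteq> Ln" by (auto simp: Ln_def)
  ultimately have "(T \<times> {0}) \<inter> (Ln - A) \<noteq> {}"
    using assms by (simp add: Bernstein_set_def)
  then show False using T(3) by force
qed

lemma Bernstein_set_countable_Ln_Diff_open:
  fixes A :: "('a::euclidean_space \<times> real) set"
  assumes "Bernstein_set A" "open V" "A \<subseteq> V"
  shows "countable (Ln - V)"
proof (rule ccontr)
  assume "uncountable (Ln - V)"
  then obtain K where "compact K" "uncountable K" "K \<subseteq> Ln - V"
    using closed_uncountable_imp_compact_subset[OF closed_Diff[OF closed_Ln assms(2)]] by blast
  then have "K \<inter> A \<noteq> {}" using assms(1) by (auto simp: Bernstein_set_def)
  then show False using \<open>K \<subseteq> Ln - V\<close> assms(3) by blast
qed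

lemma Lindelof_image:
  fixes f :: "'b \<Rightarrow> 'a::second_countable_topology set"
  assumes "\<And>U. U \<in> \<U> \<Longrightarrow> open (f U)"
  obtains \<U>\<^sub>0 where "\<U>\<^sub>0 \<subseteq> \<U>" "countable \<U>\<^sub>0" "\<Union>(f ` \<U>\<^sub>0) = \<Union>(f ` \<U>)"
proof -
  obtain \<F> where "\<F> \<subseteq> f ` \<U>" "countable \<F>" "\<Union>\<F> = \<Union>(f ` \<U>)"
    using Lindelof[of "f ` \<U>"] assms by blast
  then show ?thesis using that by (metis countable_subset_image)
qed

lemma countable_subcover_from_countable_remainder:
  assumes "S \<subseteq> \<Union>\<U>" "\<U>\<^sub>0 \<subseteq> \<U>" "countable \<U>\<^sub>0" "countable R" "S \<subseteq> \<Union>\<U>\<^sub>0 \<union> R"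
  obtains \<V> where "countable \<V>" "\<V> \<subseteq> \<U>" "S \<subseteq> \<Union>\<V>"
proof -
  have "\<forall>x\<in>S. \<exists>U. U \<in> \<U> \<and> x \<in> U" using assms(1) by blast
  then obtain pick where pick: "\<And>x. x \<in> S \<Longrightarrow> pick x \<in> \<U> \<and> x \<in> pick x"
    by (metis bchoice)
  show ?thesis
  proof
    show "countable (\<U>\<^sub>0 \<union> pick ` (R \<inter> S))" using assms(3,4) by simp
    show "\<U>\<^sub>0 \<union> pick ` (R \<inter> S) \<subseteq> \<U>" using assms(2) pick by blast
    show "S \<subseteq> \<Union>(\<U>\<^sub>0 \<union> pick ` (R \<inter> S))" using assms(5) pick by blast
  qed
qed

lemma Lindelof_space_tauA:
  fixes A :: "('a::euclidean_space \<times> real) set"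
  assumes "Bernstein_set A"
  shows "Lindelof_space (tauA A)"
  unfolding Lindelof_space_alt topspace_tauA
proof (intro allI impI)
  fix \<U> assume "(\<forall>U\<in>\<U>. openin (tauA A) U) \<and> Xn \<subseteq> \<Union>\<U>"
  then have open_\<U>: "\<And>U. U \<in> \<U> \<Longrightarrow> openin (tauA A) U" and cover: "Xn \<subseteq> \<Union>\<U>" by auto
  define E where "E U = interior (U \<union> - Xn)" for U :: "('a \<times> real) set"
  obtain \<U>\<^sub>0 where \<U>\<^sub>0: "\<U>\<^sub>0 \<subseteq> \<U>" "countable \<U>\<^sub>0" "\<Union>(E ` \<U>\<^sub>0) = \<Union>(E ` \<U>)"
    by (rule Lindelof_image[of \<U> E]) (auto simp: E_def)
  have "Pn \<union> A \<subseteq> \<Union>(E ` \<U>)"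
  proof
    fix x assume "x \<in> Pn \<union> A"
    moreover obtain U where "U \<in> \<U>" "x \<in> U"
      using cover \<open>x \<in> Pn \<union> A\<close> assms by (auto simp: Xn_def Bernstein_set_def)
    ultimately show "x \<in> \<Union>(E ` \<U>)"
      using openin_tauA_subset_interior[OF open_\<U>] unfolding E_def by blast
  qed
  then have "countable (Ln - \<Union>(E ` \<U>))"
    using assms by (intro Bernstein_set_countable_Ln_Diff_open) (auto simp: E_def)
  moreover have "Xn \<subseteq> \<Union>\<U>\<^sub>0 \<union> (Ln - \<Union>(E ` \<U>))"
    using \<open>Pn \<union> A \<subseteq> \<Union>(E ` \<U>)\<close> \<U>\<^sub>0(3) interior_subset unfolding E_def Xn_def by blast
  ultimately show "\<exists>\<V>. countable \<V> \<and> \<V> \<subseteq> \<U> \<and> Xn \<subseteq> \<Union>\<V>"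
    using countable_subcover_from_countable_remainder[OF cover \<U>\<^sub>0(1,2)] by metis
qed

lemma not_perfect_space_top_tauA:
  fixes A :: "('a::euclidean_space \<times> real) set"
  assumes "Bernstein_set A"
  shows "\<not> perfect_space_top (tauA A)"
proof
  assume "perfect_space_top (tauA A)"
  moreover have "A \<subseteq> Ln" using assms by (simp add: Bernstein_set_def)
  ultimately have "gdelta_in (tauA A) A"
    using closedin_tauA_self by (auto simp: perfect_space_top_def)
  then obtain \<U> where \<U>: "countable \<U>" "\<And>U. U \<in> \<U> \<Longrightarrow> openin (tauA A) U" "\<Inter>\<U> = A"
    by (auto simp: gdelta_in_alt intersection_of_def)
  have "Ln - A \<subseteq> (\<Union>U\<in>\<U>. Ln - interior (U \<union> - Xn))"
  proof
    fix x assume "x \<in> Ln - A"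
    then obtain U where "U \<in> \<U>" "x \<notin> U" "x \<in> Xn" using \<U>(3) by (auto simp: Xn_def)
    then show "x \<in> (\<Union>U\<in>\<U>. Ln - interior (U \<union> - Xn))"
      using \<open>x \<in> Ln - A\<close> interior_subset by fastforce
  qed
  moreover have "countable (Ln - interior (U \<union> - Xn))" if "U \<in> \<U>" for U
    using openin_tauA_subset_interior[OF \<U>(2)[OF that]] \<U>(3) that
    by (intro Bernstein_set_countable_Ln_Diff_open[OF assms]) auto
  ultimately have "countable (Ln - A)"
    using \<U>(1) by (meson countable_UN countable_subset)
  then show False using Bernstein_set_uncountable_Ln_Diff[OF assms] by contradiction
qed

theorem mainTheorem18:
  fixes A :: "('a::euclidean_space \<times> real) set"
  assumes "Bernstein_set A"
  shows "Lindelof_space (tauA A) \<and> \<not> perfect_space_top (tauA A)"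
  using Lindelof_space_tauA[OF assms] not_perfect_space_top_tauA[OF assms] by simp

end
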